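(* For integers $m\ge1$ and $k\ge0$, $$\mu(N|_m,k,J)\equiv\begin{cases}1\pmod 2,&\text{if }k=0,\\ 0\pmod 2,&\text{if }k\ge1.\end{cases}$$
   Context: Let $N=\{0,1,2,\ldots\}$ and $J=\{(2n+1)2^{2k}-1 : n,k\in N\}=\{0,2,3,4,6,8,10,11,\ldots\}$. For an infinite set $A\subseteq N$, $A|_m$ denotes the set of the $m$ smallest elements of $A$. An involution on a finite set $A$ is a permutation $\sigma$ of $A$ with $\sigma=\sigma^{-1}$; its cycles are fixed points and transpositions $(c,d)$. A transposition $(c,d)$ is said to be in a set $B$ if $c+d\in B$. For a finite set $A\subseteq N$, an integer $k\ge0$ and a set $B\subseteq N$, $\mu(A,k,B)$ denotes the number of involutions of $A$ having exactly $k$ transpositions, all of which are in $B$. *)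

theory Defs
  imports "HOL-Combinatorics.Permutations"
begin

definition J :: "nat set" where
  "J = {(2*n+1) * 2^(2*k) - 1 | n k. True}"

definition first_m :: "nat set \<Rightarrow> nat \<Rightarrow> nat set" where
  "first_m A m = {a \<in> A. card {b \<in> A. b < a} < m}"

definition involutions :: "nat set \<Rightarrow> (nat \<Rightarrow> nat) set" where
  "involutions A = {\<sigma>. \<sigma> permutes A \<and> (\<forall>x. \<sigma> (\<sigma> x) = x)}"

definition transpositions_of :: "(nat \<Rightarrow> nat) \<Rightarrow> nat set \<Rightarrow> nat set set" where
  "transpositions_of \<sigma> A = {{c, \<sigma> c} | c. c \<in> A \<and> \<sigma> c \<noteq> c}"

definition mu :: "nat set \<Rightarrow> nat \<Rightarrow> nat set \<Rightarrow> nat" where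
  "mu A k B = card {\<sigma> \<in> involutions A.
      card (transpositions_of \<sigma> A) = k \<and>
      (\<forall>c \<in> A. \<sigma> c \<noteq> c \<longrightarrow> c + \<sigma> c \<in> B)}"

end

theory Submission
  imports Defs "HOL-Library.Z2" "HOL-Computational_Algebra.Polynomial"
begin

text \<open>
  Over GF(2) let P(S) be the generating polynomial of the involutions of S all of whose
  transpositions lie in J, counted by their number of transpositions; the claim is P({0..<m}) = 1.
  Since x \<in> J iff the exponent of 2 in x + 1 is even, 2c + 2d and 2c + 2d + 2 always lie in J,
  whereas 2c + 2d + 1 \<in> J iff c + d \<notin> J. Hence the map exchanging 2i and 2i+1 preserves
  J-adjacency. Expanding P by deleting points and cancelling the terms that this symmetry pairs
  off gives, for the doubled set D(B) = {2i, 2i+1 | i \<in> B},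
  P(D(B)) = P(B)^2 and P(D(B) \<union> {2t}) = P(B \<union> {t}) P(B).
  Since {0..<2n} = D({0..<n}) and {0..<2n+1} = D({0..<n}) \<union> {2n}, induction on m gives
  P({0..<m}) = 1.\<close>

section \<open>The set J\<close>

lemma mem_J_iff: "x \<in> J \<longleftrightarrow> (\<exists>n k. x + 1 = (2*n+1) * 4^k)"
proof -
  have "x \<in> J \<longleftrightarrow> (\<exists>n k. x = (2*n+1) * 4^k - 1)"
    unfolding J_def by (simp add: power_mult)
  also have "\<dots> \<longleftrightarrow> (\<exists>n k. x + 1 = (2*n+1) * 4^k)"
  proof -
    have "\<And>n k. (2*n+1) * (4::nat)^k \<ge> 1" by (simp add: Suc_le_eq)
    then show ?thesis by (metis add_diff_cancel_right' le_add_diff_inverse2)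
  qed
  finally show ?thesis .
qed

lemma even_in_J: "even x \<Longrightarrow> x \<in> J"
  unfolding mem_J_iff by (rule exI[of _ "x div 2"], rule exI[of _ 0]) auto

lemma odd_times_power4_neq: "(2*a+1) * 4^k \<noteq> (2*b+1) * 2 * (4::nat)^l"
proof (induction k arbitrary: l)
  case 0
  have "odd ((2*a+1) * 4^0::nat)" by simp
  moreover have "even ((2*b+1)*2*(4::nat)^l)" by simp
  ultimately show ?case by (metis (no_types))
next
  case (Suc k)
  show ?case
  proof (cases l)
    case 0
    have "(2*a+1) * 4^Suc k mod 4 = (0::nat)" by simp
    moreover have "(2*b+1) * 2 * (4::nat)^0 mod 4 = 2" by (simp only: power_0 mult_1_right) presburger
    ultimately show ?thesis using 0 by (metis zero_neq_numeral)
  next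
    case (Suc l')
    then show ?thesis using Suc.IH[of l'] by auto
  qed
qed

lemma exists_odd_times_power2: "(n::nat) > 0 \<Longrightarrow> \<exists>a e. n = (2*a+1) * 2^e"
proof (induction n rule: less_induct)
  case (less n)
  show ?case
  proof (cases "even n")
    case True
    then obtain m where m: "n = 2*m" by auto
    then have "m < n" "m > 0" using less.prems by auto
    then obtain a e where "m = (2*a+1) * 2^e" using less.IH by blast
    then show ?thesis using m by (intro exI[of _ a] exI[of _ "Suc e"]) auto
  next
    case False
    then obtain a where "n = 2*a+1" using oddE by blast
    then show ?thesis by (intro exI[of _ a] exI[of _ 0]) auto
  qed
qed

lemma Suc_double_in_J_iff: "2*s+1 \<in> J \<longleftrightarrow> s \<notin> J"
proof
  assume "2*s+1 \<in> J"
  then obtain n k where nk: "2*s+1+1 = (2*n+1) * 4^k" unfolding mem_J_iff by blast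
  show "s \<notin> J"
  proof
    assume "s \<in> J"
    then obtain n' k' where "s+1 = (2*n'+1) * 4^k'" unfolding mem_J_iff by blast
    then have "2*s+1+1 = (2*n'+1) * 2 * 4^k'" by simp
    with nk odd_times_power4_neq show False by metis
  qed
next
  assume "s \<notin> J"
  obtain a e where ae: "s + 1 = (2*a+1) * 2^e" using exists_odd_times_power2[of "s+1"] by auto
  show "2*s+1 \<in> J"
  proof (cases "even e")
    case True
    then obtain k where "e = 2*k" by auto
    then have "s + 1 = (2*a+1) * 4^k" using ae by (simp add: power_mult)
    with \<open>s \<notin> J\<close> show ?thesis unfolding mem_J_iff by blast
  next
    case False
    then obtain k where "e = 2*k+1" using oddE by blast
    have "(2::nat) ^ (2*(k+1)) = 4^(k+1)" by (simp add: power_mult)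
    then have "2*s+1+1 = (2*a+1) * 4^(k+1)" using ae \<open>e = 2*k+1\<close> by simp
    then show ?thesis unfolding mem_J_iff by blast
  qed
qed

section \<open>The generating polynomial of J-involutions over GF(2)\<close>

definition J_involutions :: "nat set \<Rightarrow> (nat \<Rightarrow> nat) set" where
  "J_involutions S = {\<sigma> \<in> involutions S. \<forall>c\<in>S. \<sigma> c \<noteq> c \<longrightarrow> c + \<sigma> c \<in> J}"

definition num_transpositions :: "(nat \<Rightarrow> nat) \<Rightarrow> nat set \<Rightarrow> nat" where
  "num_transpositions \<sigma> S = card (transpositions_of \<sigma> S)"

definition J_poly :: "nat set \<Rightarrow> bit poly" where
  "J_poly S = (\<Sum>\<sigma>\<in>J_involutions S. monom 1 (num_transpositions \<sigma> S))"

abbreviation X :: "bit poly" where "X \<equiv> monom 1 1"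

lemma J_involutions_iff: "\<sigma> \<in> J_involutions S \<longleftrightarrow>
    (\<forall>x. x \<notin> S \<longrightarrow> \<sigma> x = x) \<and> (\<forall>x. \<sigma> (\<sigma> x) = x) \<and> (\<forall>c\<in>S. \<sigma> c \<noteq> c \<longrightarrow> c + \<sigma> c \<in> J)"
  unfolding J_involutions_def involutions_def permutes_def by (auto; metis)

lemma J_involution_mem: "\<sigma> \<in> J_involutions S \<Longrightarrow> v \<in> S \<Longrightarrow> \<sigma> v \<in> S"
  unfolding J_involutions_iff by metis

lemma finite_J_involutions: "finite S \<Longrightarrow> finite (J_involutions S)"
  by (rule finite_subset[OF _ finite_permutations[of S]]) (auto simp: J_involutions_def involutions_def)

lemma finite_transpositions_of: "finite A \<Longrightarrow> finite (transpositions_of \<sigma> A)"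
  by (rule finite_subset[of _ "(\<lambda>c. {c, \<sigma> c}) ` A"]) (auto simp: transpositions_of_def)

lemma coeff_J_poly: "finite S \<Longrightarrow> coeff (J_poly S) k = of_nat (mu S k J)"
proof -
  assume fin: "finite S"
  have "coeff (J_poly S) k = (\<Sum>\<sigma>\<in>J_involutions S. if num_transpositions \<sigma> S = k then 1 else 0)"
    unfolding J_poly_def coeff_sum coeff_monom by (rule sum.cong) auto
  also have "\<dots> = of_nat (card {\<sigma>\<in>J_involutions S. num_transpositions \<sigma> S = k})"
    using finite_J_involutions[OF fin] by (simp add: sum.inter_filter[symmetric])
  also have "{\<sigma>\<in>J_involutions S. num_transpositions \<sigma> S = k} = {\<sigma> \<in> involutions S.
      card (transpositions_of \<sigma> S) = k \<and> (\<forall>c \<in> S. \<sigma> c \<noteq> c \<longrightarrow> c + \<sigma> c \<in> J)}"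
    unfolding J_involutions_def num_transpositions_def by auto
  finally show ?thesis unfolding mu_def .
qed

lemma J_poly_empty [simp]: "J_poly {} = 1"
proof -
  have "J_involutions {} = {id}" by (auto simp: J_involutions_iff fun_eq_iff)
  moreover have "transpositions_of id {} = {}" unfolding transpositions_of_def by auto
  ultimately show ?thesis unfolding J_poly_def num_transpositions_def by simp
qed

lemma J_involutions_fixing: "{\<sigma>\<in>J_involutions S. \<sigma> v = v} = J_involutions (S - {v})"
  by (auto simp: J_involutions_iff; metis DiffI empty_iff insert_iff)

lemma num_transpositions_remove_fixed:
  "\<sigma> v = v \<Longrightarrow> num_transpositions \<sigma> S = num_transpositions \<sigma> (S - {v})"
  unfolding num_transpositions_def transpositions_of_def by (rule arg_cong[where f=card]) auto

lemma bij_betw_J_involutions_swapping: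
  assumes "u \<noteq> v" "v \<in> S" "u \<in> S" "v + u \<in> J"
  shows "bij_betw (\<lambda>\<tau>. \<tau>(v:=u, u:=v)) (J_involutions (S - {v} - {u})) {\<sigma>\<in>J_involutions S. \<sigma> v = u}"
proof (rule bij_betw_byWitness[where f'="\<lambda>\<sigma>. \<sigma>(v:=v, u:=u)"])
  show "\<forall>\<tau>\<in>J_involutions (S - {v} - {u}). \<tau>(v := u, u := v, v := v, u := u) = \<tau>"
    by (auto simp: J_involutions_iff fun_eq_iff)
  show "\<forall>\<sigma>\<in>{\<sigma> \<in> J_involutions S. \<sigma> v = u}. \<sigma>(v := v, u := u, v := u, u := v) = \<sigma>"
    unfolding J_involutions_iff by (auto simp: fun_eq_iff)
  show "(\<lambda>\<tau>. \<tau>(v := u, u := v)) ` J_involutions (S - {v} - {u}) \<subseteq> {\<sigma> \<in> J_involutions S. \<sigma> v = u}"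
  proof clarify
    fix \<tau> assume "\<tau> \<in> J_involutions (S - {v} - {u})"
    then have out: "\<And>x. x \<notin> S - {v} - {u} \<Longrightarrow> \<tau> x = x" and inv: "\<And>x. \<tau> (\<tau> x) = x"
      and adj: "\<And>c. c \<in> S - {v} - {u} \<Longrightarrow> \<tau> c \<noteq> c \<Longrightarrow> c + \<tau> c \<in> J"
      unfolding J_involutions_iff by auto
    have "\<tau> v = v" "\<tau> u = u" using out by auto
    then have "\<And>x. x \<noteq> v \<Longrightarrow> \<tau> x \<noteq> v" "\<And>x. x \<noteq> u \<Longrightarrow> \<tau> x \<noteq> u"
      using inv by metis+
    then show "\<tau>(v := u, u := v) \<in> J_involutions S \<and> (\<tau>(v := u, u := v)) v = u"
      unfolding J_involutions_iff using assms out inv adj by (auto simp: add.commute)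
  qed
  show "(\<lambda>\<sigma>. \<sigma>(v := v, u := u)) ` {\<sigma> \<in> J_involutions S. \<sigma> v = u} \<subseteq> J_involutions (S - {v} - {u})"
  proof (rule image_subsetI)
    fix \<sigma> assume "\<sigma> \<in> {\<sigma> \<in> J_involutions S. \<sigma> v = u}"
    then have \<sigma>v: "\<sigma> v = u" and out: "\<And>x. x \<notin> S \<Longrightarrow> \<sigma> x = x" and inv: "\<And>x. \<sigma> (\<sigma> x) = x"
      and adj: "\<And>c. c \<in> S \<Longrightarrow> \<sigma> c \<noteq> c \<Longrightarrow> c + \<sigma> c \<in> J"
      unfolding J_involutions_iff by auto
    have "\<And>x. x \<noteq> u \<Longrightarrow> \<sigma> x \<noteq> v" "\<And>x. x \<noteq> v \<Longrightarrow> \<sigma> x \<noteq> u"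
      using inv \<sigma>v by metis+
    then show "\<sigma>(v := v, u := u) \<in> J_involutions (S - {v} - {u})"
      unfolding J_involutions_iff using assms out inv adj by auto
  qed
qed

lemma num_transpositions_swapping:
  assumes "u \<noteq> v" "v \<in> S" "u \<in> S" "finite S" "\<tau> \<in> J_involutions (S - {v} - {u})"
  shows "num_transpositions (\<tau>(v:=u, u:=v)) S = Suc (num_transpositions \<tau> (S - {v} - {u}))"
proof -
  have fix_vu: "\<tau> v = v" "\<tau> u = u" and inv: "\<And>x. \<tau> (\<tau> x) = x"
    and out: "\<And>x. x \<notin> S - {v} - {u} \<Longrightarrow> \<tau> x = x"
    using assms(1,5) unfolding J_involutions_iff by auto
  have "transpositions_of (\<tau>(v:=u, u:=v)) S = insert {v,u} (transpositions_of \<tau> (S - {v} - {u}))"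
    unfolding transpositions_of_def using assms(1-3) fix_vu inv out by (auto simp: insert_commute)
  moreover have "{v,u} \<notin> transpositions_of \<tau> (S - {v} - {u})"
    unfolding transpositions_of_def using inv fix_vu by (auto simp: doubleton_eq_iff)
  ultimately show ?thesis
    unfolding num_transpositions_def using finite_transpositions_of[of "S - {v} - {u}" \<tau>] assms(4) by simp
qed

text \<open>Deletion recurrence: v is either a fixed point, or it is transposed with one of its J-neighbours u.\<close>
lemma J_poly_remove:
  assumes fin: "finite S" and vS: "v \<in> S"
  shows "J_poly S = J_poly (S - {v}) + X * (\<Sum>u\<in>{u\<in>S - {v}. v + u \<in> J}. J_poly (S - {v} - {u}))"
proof -
  let ?m = "\<lambda>\<sigma>. monom (1::bit) (num_transpositions \<sigma> S)"
  have "J_poly S = (\<Sum>u\<in>S. \<Sum>\<sigma>\<in>{\<sigma>\<in>J_involutions S. \<sigma> v = u}. ?m \<sigma>)"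
    unfolding J_poly_def
    by (rule sum.group[symmetric]) (use finite_J_involutions[OF fin] fin J_involution_mem[OF _ vS] in auto)
  also have "\<dots> = (\<Sum>\<sigma>\<in>{\<sigma>\<in>J_involutions S. \<sigma> v = v}. ?m \<sigma>)
      + (\<Sum>u\<in>S - {v}. \<Sum>\<sigma>\<in>{\<sigma>\<in>J_involutions S. \<sigma> v = u}. ?m \<sigma>)"
    using fin vS by (simp add: sum.remove)
  also have "(\<Sum>\<sigma>\<in>{\<sigma>\<in>J_involutions S. \<sigma> v = v}. ?m \<sigma>) = J_poly (S - {v})"
    unfolding J_involutions_fixing J_poly_def
    by (rule sum.cong) (auto simp: num_transpositions_remove_fixed[symmetric] J_involutions_iff)
  also have "(\<Sum>u\<in>S - {v}. \<Sum>\<sigma>\<in>{\<sigma>\<in>J_involutions S. \<sigma> v = u}. ?m \<sigma>)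
      = (\<Sum>u\<in>S - {v}. if v + u \<in> J then X * J_poly (S - {v} - {u}) else 0)"
  proof (rule sum.cong[OF refl])
    fix u assume u: "u \<in> S - {v}"
    show "(\<Sum>\<sigma>\<in>{\<sigma>\<in>J_involutions S. \<sigma> v = u}. ?m \<sigma>)
        = (if v + u \<in> J then X * J_poly (S - {v} - {u}) else 0)"
    proof (cases "v + u \<in> J")
      case True
      have "(\<Sum>\<sigma>\<in>{\<sigma>\<in>J_involutions S. \<sigma> v = u}. ?m \<sigma>)
          = (\<Sum>\<tau>\<in>J_involutions (S - {v} - {u}). ?m (\<tau>(v:=u, u:=v)))"
        using bij_betw_J_involutions_swapping[of u v S] u vS True
        by (intro sum.reindex_bij_betw[symmetric]) auto
      also have "\<dots> = (\<Sum>\<tau>\<in>J_involutions (S - {v} - {u}).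
          X * monom 1 (num_transpositions \<tau> (S - {v} - {u})))"
        by (rule sum.cong[OF refl]) (use u vS fin in \<open>simp add: num_transpositions_swapping mult_monom\<close>)
      finally show ?thesis using True unfolding J_poly_def by (simp add: sum_distrib_left)
    next
      case False
      then have none: "{\<sigma>\<in>J_involutions S. \<sigma> v = u} = {}"
        using u unfolding J_involutions_iff by auto
      show ?thesis using False by (subst none) simp
    qed
  qed
  also have "\<dots> = (\<Sum>u\<in>{u\<in>S - {v}. v + u \<in> J}. X * J_poly (S - {v} - {u}))"
    by (rule sum.inter_filter[symmetric]) (use fin in simp)
  finally show ?thesis by (simp add: sum_distrib_left)
qed

lemma J_poly_insert:
  assumes "finite U" "v \<notin> U"
  shows "J_poly (insert v U) = J_poly U + X * (\<Sum>u\<in>{u\<in>U. v + u \<in> J}. J_poly (U - {u}))"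
  using J_poly_remove[of "insert v U" v] assms by simp

lemma J_poly_image_eq:
  assumes "finite S" "inj_on f S"
    and "\<And>x y. x \<in> S \<Longrightarrow> y \<in> S \<Longrightarrow> x \<noteq> y \<Longrightarrow> f x + f y \<in> J \<longleftrightarrow> x + y \<in> J"
  shows "J_poly (f ` S) = J_poly S"
  using assms
proof (induction S rule: finite_psubset_induct)
  case (psubset S)
  show ?case
  proof (cases "S = {}")
    case False
    then obtain v where vS: "v \<in> S" by auto
    have inj: "inj_on f S" and fin: "finite S" using psubset by auto
    have IH: "J_poly (f ` U) = J_poly U" if "U \<subseteq> S - {v}" for U
      using psubset.IH[of U] psubset.prems that vS by (auto intro: inj_on_subset)
    have image_remove: "f ` S - {f v} = f ` (S - {v})"
      and image_remove2: "\<And>u. u \<in> S \<Longrightarrow> f ` S - {f v} - {f u} = f ` (S - {v} - {u})"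
      using inj vS by (auto simp: inj_on_def)
    have "{u'\<in>f ` S - {f v}. f v + u' \<in> J} = f ` {u\<in>S - {v}. v + u \<in> J}"
      unfolding image_remove using psubset.prems(2) vS by (auto simp: image_iff)
    then have "(\<Sum>u'\<in>{u'\<in>f ` S - {f v}. f v + u' \<in> J}. J_poly (f ` S - {f v} - {u'}))
        = (\<Sum>u\<in>{u\<in>S - {v}. v + u \<in> J}. J_poly (f ` S - {f v} - {f u}))"
      using inj by (simp add: sum.reindex inj_on_subset[of f S])
    also have "\<dots> = (\<Sum>u\<in>{u\<in>S - {v}. v + u \<in> J}. J_poly (S - {v} - {u}))"
      using image_remove2 IH by (intro sum.cong) auto
    finally show ?thesis
      using J_poly_remove[of "f ` S" "f v"] J_poly_remove[OF fin vS] IH[of "S - {v}"] image_remove fin vS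
      by simp
  qed simp
qed

section \<open>Sums in characteristic 2\<close>

lemma bit_poly_two_eq_zero [simp]: "(2::bit poly) = 0"
  by (metis bit_2_eq_0 of_nat_numeral of_nat_poly pCons_0_0)

lemma bit_poly_power2_add: "(p + q)^2 = p^2 + (q::bit poly)^2"
  by (simp add: power2_eq_square algebra_simps flip: mult_2)

lemma bit_poly_power2_sum: "(\<Sum>x\<in>A. f x)^2 = (\<Sum>x\<in>A. (f x)^2 :: bit poly)"
  by (induction A rule: infinite_finite_induct) (auto simp: bit_poly_power2_add)

lemma sum_bit_poly_involution:
  fixes g :: "'a \<Rightarrow> bit poly"
  assumes "finite A" "\<And>x. x \<in> A \<Longrightarrow> \<iota> x \<in> A" "\<And>x. x \<in> A \<Longrightarrow> \<iota> (\<iota> x) = x"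
    "\<And>x. x \<in> A \<Longrightarrow> g (\<iota> x) = g x"
  shows "sum g A = sum g {x\<in>A. \<iota> x = x}"
  using assms
proof (induction A rule: finite_psubset_induct)
  case (psubset A)
  show ?case
  proof (cases "\<exists>x\<in>A. \<iota> x \<noteq> x")
    case True
    then obtain x where x: "x \<in> A" "\<iota> x \<noteq> x" by auto
    let ?A = "A - {x, \<iota> x}"
    have ix: "\<iota> x \<in> A" "\<iota> (\<iota> x) = x" using psubset.prems x by auto
    have "\<iota> y \<in> ?A" if "y \<in> ?A" for y
    proof -
      have "\<iota> (\<iota> y) = y" using that psubset.prems(2) by auto
      then have "\<iota> y \<noteq> x" "\<iota> y \<noteq> \<iota> x" using that ix by auto
      then show ?thesis using that psubset.prems(1) by auto
    qed
    then have IH: "sum g ?A = sum g {y\<in>?A. \<iota> y = y}"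
      using psubset.IH[of ?A] psubset.prems x by auto
    have "sum g A = g x + g (\<iota> x) + sum g ?A"
      using x ix psubset.hyps by (simp add: sum.remove Diff_insert2[symmetric] add.assoc)
    also have "g x + g (\<iota> x) = 0" using psubset.prems(3)[OF x(1)] by simp
    finally have "sum g A = sum g ?A" by simp
    moreover have "{y\<in>?A. \<iota> y = y} = {y\<in>A. \<iota> y = y}" using x ix by auto
    ultimately show ?thesis using IH by simp
  next
    case False
    then have "{x\<in>A. \<iota> x = x} = A" by auto
    then show ?thesis by simp
  qed
qed

lemma sum_bit_poly_filter_add:
  fixes h :: "'a \<Rightarrow> bit poly"
  assumes "finite A"
  shows "sum h A + sum h {x\<in>A. \<not> Q x} = sum h {x\<in>A. Q x}"
proof -
  have "sum h A = sum h {x\<in>A. Q x} + sum h {x\<in>A. \<not> Q x}"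
    using assms by (subst sum.union_disjoint[symmetric]) (auto intro: sum.cong)
  then show ?thesis by (simp add: add.assoc)
qed

section \<open>The parity swap and doubled sets\<close>

definition swap_parity :: "nat \<Rightarrow> nat" where
  "swap_parity x = (if even x then x + 1 else x - 1)"

definition doubled :: "nat set \<Rightarrow> nat set" where
  "doubled B = (\<lambda>i. 2*i) ` B \<union> (\<lambda>i. 2*i+1) ` B"

lemma swap_parity_swap_parity [simp]: "swap_parity (swap_parity x) = x"
  unfolding swap_parity_def by auto

lemma swap_parity_double [simp]: "swap_parity (2*i) = Suc (2*i)"
  and swap_parity_Suc_double [simp]: "swap_parity (Suc (2*i)) = 2*i"
  unfolding swap_parity_def by auto

lemma swap_parity_neq: "swap_parity x \<noteq> x"
  unfolding swap_parity_def by (cases x) auto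

lemma inj_swap_parity: "inj swap_parity"
  by (metis injI swap_parity_swap_parity)

lemma swap_parity_eq_iff [simp]: "swap_parity x = swap_parity y \<longleftrightarrow> x = y"
  by (metis swap_parity_swap_parity)

lemma mem_image_swap_parity_iff: "x \<in> swap_parity ` A \<longleftrightarrow> swap_parity x \<in> A"
  by (metis image_iff swap_parity_swap_parity)

lemma swap_parity_add_in_J_iff: "swap_parity x + swap_parity y \<in> J \<longleftrightarrow> x + y \<in> J"
proof (cases "even x = even y")
  case True
  then show ?thesis unfolding swap_parity_def by (auto simp: even_in_J)
next
  case False
  then show ?thesis using odd_pos[of x] odd_pos[of y] unfolding swap_parity_def by auto
qed

lemma J_poly_image_swap_parity: "finite A \<Longrightarrow> J_poly (swap_parity ` A) = J_poly A"
  by (rule J_poly_image_eq) (auto simp: inj_on_subset[OF inj_swap_parity] swap_parity_add_in_J_iff)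

lemma finite_doubled: "finite B \<Longrightarrow> finite (doubled B)"
  unfolding doubled_def by simp

lemma swap_parity_image_doubled [simp]: "swap_parity ` doubled B = doubled B"
  unfolding doubled_def image_Un image_image by auto

lemma doubled_remove: "doubled B - {2*i, 2*i+1} = doubled (B - {i})"
  unfolding doubled_def by auto

lemma doubled_insert_remove: "b \<in> B \<Longrightarrow> doubled B = insert (2*b) (insert (2*b+1) (doubled (B - {b})))"
  unfolding doubled_def by auto

lemma double_notin_doubled: "b \<notin> B \<Longrightarrow> 2*b \<notin> doubled B \<and> 2*b+1 \<notin> doubled B"
  unfolding doubled_def by (auto, presburger+)

lemma doubled_atLeastLessThan: "doubled {0..<n} = {0..<2*n}"
proof
  show "{0..<2*n} \<subseteq> doubled {0..<n}"
  proof
    fix x assume "x \<in> {0..<2*n}"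
    then have "x div 2 \<in> {0..<n}" "x = 2 * (x div 2) \<or> x = 2 * (x div 2) + 1" by auto
    then show "x \<in> doubled {0..<n}" unfolding doubled_def by blast
  qed
qed (auto simp: doubled_def)

text \<open>
  2c is J-adjacent to every 2i, and to 2i+1 exactly when c + i \<notin> J; the indices
  i with c + i \<notin> J are therefore counted twice and cancel.\<close>
lemma sum_adjacent_doubled:
  assumes fin: "finite C" and gh: "\<And>i. i \<in> C \<Longrightarrow> g (2*i) = h i \<and> g (2*i+1) = h i"
  shows "(\<Sum>w\<in>{w\<in>doubled C. 2*c + w \<in> J}. g w) = (\<Sum>i\<in>{i\<in>C. c + i \<in> J}. (h i :: bit poly))"
proof -
  have "\<And>i. 2*c + (2*i+1) \<in> J \<longleftrightarrow> c + i \<notin> J"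
    using Suc_double_in_J_iff by (metis add.assoc distrib_left)
  then have adjacent: "{w\<in>doubled C. 2*c + w \<in> J} = (\<lambda>i. 2*i) ` C \<union> (\<lambda>i. 2*i+1) ` {i\<in>C. c + i \<notin> J}"
    unfolding doubled_def by (auto simp: even_in_J)
  have "(\<Sum>w\<in>{w\<in>doubled C. 2*c + w \<in> J}. g w)
      = (\<Sum>w\<in>(\<lambda>i. 2*i) ` C. g w) + (\<Sum>w\<in>(\<lambda>i. 2*i+1) ` {i\<in>C. c + i \<notin> J}. g w)"
    unfolding adjacent using fin by (intro sum.union_disjoint) (auto, presburger)
  also have "(\<Sum>w\<in>(\<lambda>i. 2*i) ` C. g w) = (\<Sum>i\<in>C. h i)"
    by (subst sum.reindex) (auto simp: inj_on_def gh)
  also have "(\<Sum>w\<in>(\<lambda>i. 2*i+1) ` {i\<in>C. c + i \<notin> J}. g w) = (\<Sum>i\<in>{i\<in>C. c + i \<notin> J}. h i)"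
    by (subst sum.reindex) (auto simp: inj_on_def gh intro!: sum.cong simp del: One_nat_def)
  finally show ?thesis using sum_bit_poly_filter_add[OF fin, of h "\<lambda>i. c + i \<in> J"] by simp
qed

section \<open>Squaring and the main recurrences\<close>

lemma J_poly_insert_insert:
  assumes fin: "finite T" and "v \<notin> T" "u \<notin> T" "v \<noteq> u" "v + u \<notin> J"
  shows "J_poly (insert v (insert u T)) = J_poly T
    + X * (\<Sum>w\<in>{w\<in>T. u + w \<in> J}. J_poly (T - {w}))
    + X * (\<Sum>w\<in>{w\<in>T. v + w \<in> J}. J_poly (T - {w}))
    + X^2 * (\<Sum>w\<in>{w\<in>T. v + w \<in> J}. \<Sum>w'\<in>{w'\<in>T - {w}. u + w' \<in> J}. J_poly (T - {w} - {w'}))"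
proof -
  have "{w\<in>insert u T. v + w \<in> J} = {w\<in>T. v + w \<in> J}" using assms by auto
  moreover have "\<And>w. w \<in> T \<Longrightarrow> insert u T - {w} = insert u (T - {w})" using assms by auto
  ultimately have "J_poly (insert v (insert u T)) = J_poly (insert u T)
      + X * (\<Sum>w\<in>{w\<in>T. v + w \<in> J}. J_poly (insert u (T - {w})))"
    using J_poly_insert[of "insert u T" v] assms by simp
  moreover have "J_poly (insert u (T - {w})) = J_poly (T - {w})
      + X * (\<Sum>w'\<in>{w'\<in>T - {w}. u + w' \<in> J}. J_poly (T - {w} - {w'}))" for w
    using J_poly_insert[of "T - {w}" u] assms by simp
  ultimately show ?thesis
    using J_poly_insert[OF fin \<open>u \<notin> T\<close>]
    by (simp add: sum.distrib sum_distrib_left power2_eq_square algebra_simps)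
qed

lemma sum_J_poly_remove_swap_parity:
  assumes fin: "finite T" and swap: "swap_parity ` T = T"
  shows "(\<Sum>w\<in>{w\<in>T. swap_parity x + w \<in> J}. J_poly (T - {w}))
       = (\<Sum>w\<in>{w\<in>T. x + w \<in> J}. J_poly (T - {w}))"
proof -
  have "swap_parity w \<in> T \<longleftrightarrow> w \<in> T" for w
    using swap mem_image_swap_parity_iff by blast
  moreover have "swap_parity x + w \<in> J \<longleftrightarrow> x + swap_parity w \<in> J" for w
    using swap_parity_add_in_J_iff[of x "swap_parity w"] by simp
  ultimately have "{w\<in>T. swap_parity x + w \<in> J} = swap_parity ` {w\<in>T. x + w \<in> J}"
    by (auto simp: mem_image_swap_parity_iff)
  moreover have "T - {swap_parity w} = swap_parity ` (T - {w})" for w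
    using swap inj_swap_parity by (simp add: image_set_diff)
  ultimately show ?thesis
    using fin by (simp add: sum.reindex inj_on_subset[OF inj_swap_parity] J_poly_image_swap_parity)
qed

text \<open>
  The involution (w, w') \<mapsto> (swap w', swap w) on pairs of neighbours pairs off all
  terms except those with w' = swap w.\<close>
lemma sum_pairs_swap_parity:
  assumes fin: "finite T" and swap: "swap_parity ` T = T"
  shows "(\<Sum>w\<in>{w\<in>T. x + w \<in> J}. \<Sum>w'\<in>{w'\<in>T - {w}. swap_parity x + w' \<in> J}. J_poly (T - {w} - {w'}))
       = (\<Sum>w\<in>{w\<in>T. x + w \<in> J}. J_poly (T - {w} - {swap_parity w}))"
proof -
  define W where "W = {w\<in>T. x + w \<in> J}"
  define pairs where "pairs = Sigma W (\<lambda>w. {w'\<in>T - {w}. swap_parity x + w' \<in> J})"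
  define \<iota> where "\<iota> = (\<lambda>(w, w'). (swap_parity w', swap_parity w))"
  define g where "g = (\<lambda>(w, w'). J_poly (T - {w} - {w'}))"
  have swap_mem: "swap_parity w \<in> T \<longleftrightarrow> w \<in> T" for w
    using swap mem_image_swap_parity_iff by blast
  have adj: "swap_parity x + w \<in> J \<longleftrightarrow> x + swap_parity w \<in> J" for w
    using swap_parity_add_in_J_iff[of x "swap_parity w"] by simp
  have "(\<Sum>w\<in>W. \<Sum>w'\<in>{w'\<in>T - {w}. swap_parity x + w' \<in> J}. J_poly (T - {w} - {w'})) = sum g pairs"
    unfolding pairs_def g_def W_def using fin by (subst sum.Sigma) auto
  also have "\<dots> = sum g {p\<in>pairs. \<iota> p = p}"
  proof (rule sum_bit_poly_involution)
    show "finite pairs" unfolding pairs_def W_def using fin by auto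
    fix p assume "p \<in> pairs"
    then obtain w w' where p: "p = (w, w')" "w \<in> T" "w' \<in> T" "w \<noteq> w'" "x + w \<in> J" "swap_parity x + w' \<in> J"
      unfolding pairs_def W_def by auto
    then show "\<iota> p \<in> pairs"
      unfolding pairs_def W_def \<iota>_def using swap_mem adj by (auto simp: add_ac)
    show "\<iota> (\<iota> p) = p" unfolding \<iota>_def p by simp
    have "swap_parity ` (T - {w} - {w'}) = T - {swap_parity w'} - {swap_parity w}"
      using swap inj_swap_parity by (auto simp: image_set_diff)
    then show "g (\<iota> p) = g p"
      unfolding g_def \<iota>_def p using J_poly_image_swap_parity[of "T - {w} - {w'}"] fin by simp
  qed
  also have "{p\<in>pairs. \<iota> p = p} = (\<lambda>w. (w, swap_parity w)) ` W"
    unfolding pairs_def W_def \<iota>_def using swap_mem adj swap_parity_neq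
    by (auto simp: image_iff)
  also have "sum g \<dots> = (\<Sum>w\<in>W. J_poly (T - {w} - {swap_parity w}))"
    by (subst sum.reindex) (auto simp: inj_on_def g_def)
  finally show ?thesis unfolding W_def .
qed

lemma J_poly_doubled: "finite B \<Longrightarrow> J_poly (doubled B) = (J_poly B)^2"
proof (induction B rule: finite_psubset_induct)
  case (psubset B)
  show ?case
  proof (cases "B = {}")
    case True
    then show ?thesis by (simp add: doubled_def)
  next
    case False
    then obtain b where b: "b \<in> B" by auto
    define C where "C = B - {b}"
    define T where "T = doubled C"
    define D where "D = (\<Sum>i\<in>{i\<in>C. b + i \<in> J}. J_poly (C - {i}))"
    have finC: "finite C" and finT: "finite T" and bC: "b \<notin> C"
      using psubset.hyps finite_doubled by (auto simp: C_def T_def)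
    have swapT: "swap_parity ` T = T" unfolding T_def by (rule swap_parity_image_doubled)
    have IH: "J_poly (doubled U) = (J_poly U)^2" if "U \<subseteq> C" for U
      using psubset.IH that b by (auto simp: C_def)
    have "Suc (4*b) \<notin> J" using Suc_double_in_J_iff[of "2*b"] even_in_J[of "2*b"] by simp
    then have "J_poly (doubled B) = J_poly T
        + X * (\<Sum>w\<in>{w\<in>T. swap_parity (2*b) + w \<in> J}. J_poly (T - {w}))
        + X * (\<Sum>w\<in>{w\<in>T. 2*b + w \<in> J}. J_poly (T - {w}))
        + X^2 * (\<Sum>w\<in>{w\<in>T. 2*b + w \<in> J}. \<Sum>w'\<in>{w'\<in>T - {w}. swap_parity (2*b) + w' \<in> J}.
            J_poly (T - {w} - {w'}))"
      using J_poly_insert_insert[OF finT, of "2*b" "2*b+1"] double_notin_doubled[OF bC]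
        doubled_insert_remove[OF b]
      by (simp add: T_def C_def)
    also have "\<dots> = J_poly T + X^2 * (\<Sum>w\<in>{w\<in>T. 2*b + w \<in> J}. J_poly (T - {w} - {swap_parity w}))"
      unfolding sum_J_poly_remove_swap_parity[OF finT swapT] sum_pairs_swap_parity[OF finT swapT]
      by (simp add: distrib_left[symmetric] add.assoc)
    also have "(\<Sum>w\<in>{w\<in>T. 2*b + w \<in> J}. J_poly (T - {w} - {swap_parity w}))
        = (\<Sum>i\<in>{i\<in>C. b + i \<in> J}. J_poly (doubled (C - {i})))"
      unfolding T_def
      by (rule sum_adjacent_doubled[OF finC]) (use doubled_remove[of C] in \<open>simp add: insert_commute Diff_insert2[symmetric]\<close>)
    also have "\<dots> = (\<Sum>i\<in>{i\<in>C. b + i \<in> J}. (J_poly (C - {i}))^2)"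
      using IH by (intro sum.cong) auto
    also have "J_poly T = (J_poly C)^2" using IH by (simp add: T_def)
    finally have "J_poly (doubled B) = (J_poly C + X * D)^2"
      by (simp add: D_def bit_poly_power2_add power_mult_distrib bit_poly_power2_sum)
    also have "J_poly C + X * D = J_poly B"
      using J_poly_insert[OF finC bC] b by (simp add: C_def D_def insert_absorb)
    finally show ?thesis .
  qed
qed

lemma J_poly_insert_double_doubled:
  "finite B \<Longrightarrow> t \<notin> B \<Longrightarrow> J_poly (insert (2*t) (doubled B)) = J_poly (insert t B) * J_poly B"
proof (induction B arbitrary: t rule: finite_psubset_induct)
  case (psubset B)
  have IH: "J_poly (insert (2*i) (doubled (B - {i}))) = J_poly B * J_poly (B - {i})" if "i \<in> B" for i
  proof -
    have "B - {i} \<subset> B" using that by auto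
    then show ?thesis using psubset.IH[of "B - {i}" i] that by (simp add: insert_absorb)
  qed
  have "J_poly (insert (2*t) (doubled B))
      = J_poly (doubled B) + X * (\<Sum>w\<in>{w\<in>doubled B. 2*t + w \<in> J}. J_poly (doubled B - {w}))"
    using J_poly_insert[OF finite_doubled[OF psubset.hyps]] double_notin_doubled[OF psubset.prems] by simp
  also have "(\<Sum>w\<in>{w\<in>doubled B. 2*t + w \<in> J}. J_poly (doubled B - {w}))
      = (\<Sum>i\<in>{i\<in>B. t + i \<in> J}. J_poly (insert (2*i) (doubled (B - {i}))))"
  proof (rule sum_adjacent_doubled[OF psubset.hyps])
    fix i assume i: "i \<in> B"
    let ?D = "doubled (B - {i})"
    have "2*i \<notin> ?D" "2*i+1 \<notin> ?D"
      using double_notin_doubled[of i "B - {i}"] by auto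
    then have "doubled B - {2*i+1} = insert (2*i) ?D" "doubled B - {2*i} = insert (2*i+1) ?D"
      unfolding doubled_insert_remove[OF i] by auto
    moreover have "J_poly (insert (2*i+1) ?D) = J_poly (insert (2*i) ?D)"
      using J_poly_image_swap_parity[of "insert (2*i) ?D"] finite_doubled psubset.hyps by simp
    ultimately show "J_poly (doubled B - {2*i}) = J_poly (insert (2*i) ?D)
        \<and> J_poly (doubled B - {2*i+1}) = J_poly (insert (2*i) ?D)"
      by simp
  qed
  also have "\<dots> = (\<Sum>i\<in>{i\<in>B. t + i \<in> J}. J_poly B * J_poly (B - {i}))"
    using IH by (intro sum.cong) auto
  also have "J_poly (doubled B) = J_poly B * J_poly B"
    using J_poly_doubled[OF psubset.hyps] by (simp add: power2_eq_square)
  finally show ?case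
    using J_poly_insert[OF psubset.hyps psubset.prems] by (simp add: sum_distrib_left algebra_simps)
qed

lemma J_poly_atLeastLessThan: "J_poly {0..<m} = 1"
proof (induction m rule: less_induct)
  case (less m)
  consider "m = 0" | "m = 1" | n where "m = 2*n" "n \<ge> 1" | n where "m = 2*n+1" "n \<ge> 1"
    by (metis One_nat_def add_0 even_two_times_div_two le_add1 mult_0_right odd_two_times_div_two_succ
        plus_1_eq_Suc less_one linorder_not_le)
  then show ?case
  proof cases
    case 2
    then have "{0..<m} = insert 0 {}" by auto
    then show ?thesis using J_poly_insert[of "{}" 0] by simp
  next
    case (3 n)
    then show ?thesis using J_poly_doubled[of "{0..<n}"] doubled_atLeastLessThan[of n] less[of n] by simp
  next
    case (4 n)
    then have "{0..<m} = insert (2*n) (doubled {0..<n})" using doubled_atLeastLessThan[of n] by auto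
    moreover have "insert n {0..<n} = {0..<Suc n}" by auto
    ultimately show ?thesis
      using J_poly_insert_double_doubled[of "{0..<n}" n] less[of n] less[of "Suc n"] 4 by simp
  qed simp
qed

lemma first_m_UNIV: "first_m UNIV m = {0..<m}"
  unfolding first_m_def by auto

lemma of_nat_bit: "(of_nat n :: bit) = of_bool (odd n)"
  by (induction n) auto

theorem theorem2p1:
  fixes m k :: nat
  assumes "m \<ge> 1"
  shows "mu (first_m UNIV m) k J mod 2 = (if k = 0 then 1 else 0)"
proof -
  have "(of_nat (mu {0..<m} k J) :: bit) = coeff (J_poly {0..<m}) k"
    by (simp add: coeff_J_poly)
  also have "\<dots> = of_bool (k = 0)"
    by (simp add: J_poly_atLeastLessThan)
  finally have "odd (mu {0..<m} k J) \<longleftrightarrow> k = 0"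
    by (simp add: of_nat_bit of_bool_eq_iff)
  then show ?thesis
    unfolding first_m_UNIV by (auto simp: mod2_eq_if)
qed

end
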